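(* Let $(M,\cdot,1)$ be a monoid, $\Sigma$ a finite alphabet, $\ell\in L$ and $(g,f)$ a factorization on $L$. Suppose the set $Q^{(g,f)}_\ell=\{S^{(g,f)}_\alpha(\ell)\mid\alpha\in\Sigma^*\}$ is finite (so that $N^{(g,f)}(\ell,1)$ is an $M$-DFA). Then for every $m\in M$ the $M$-DFA $N^{(g,f)}(\ell,m)$ satisfies: 1. it recognizes $m\cdot\ell$; 2. it is accessible; 3. each state $S^{(g,f)}_\alpha(\ell)\in Q^{(g,f)}_\ell$ is a recognizable $M$-language; 4. for each state $q=S^{(g,f)}_\alpha(\ell)$, the state language $\mathcal{N}_q$ of $N^{(g,f)}(\ell,m)$ equals $S^{(g,f)}_\alpha(\ell)$; 5. for all states $p,q$ of $N^{(g,f)}(\ell,m)$, $\mathcal{N}_p=\mathcal{N}_q$ implies $p=q$.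
   Context: $L$ is the set of all functions $\Sigma^*\to M$; $\varepsilon$ the empty word; $(m\cdot\ell)(\gamma)=m\cdot\ell(\gamma)$; $\Delta_\alpha(\ell)(\gamma)=\ell(\alpha\gamma)$. A factorization on $L$ is a pair of functions $g:L\to M$, $f:L\to L$ with $g(\ell)\cdot f(\ell)=\ell$ for all $\ell$. Define $S^{(g,f)}_\varepsilon=\mathrm{id}_L$, $S^{(g,f)}_{\alpha\sigma}=f\circ\Delta_\sigma\circ S^{(g,f)}_\alpha$ ($\sigma\in\Sigma$). An $M$-DFA is $(Q,\Sigma,u,i_u,\delta,w,\rho)$ with $Q$ finite nonempty, initial state $u$, initial value $i_u\in M$, $\delta:Q\times\Sigma\to Q$, $w:Q\times\Sigma\to M$, $\rho:Q\to M$; with $q\alpha$ the extended transition and $w^*(q,\varepsilon)=1$, $w^*(q,\alpha\sigma)=w^*(q,\alpha)\cdot w(q\alpha,\sigma)$, it recognizes $\alpha\mapsto i_u\cdot w^*(u,\alpha)\cdot\rho(u\alpha)$, and the language of state $q$ is $\alpha\mapsto w^*(q,\alpha)\cdot\rho(q\alpha)$. Recognizable means recognized by some $M$-DFA; accessible means every state is $u\alpha$ for some word $\alpha$. The automaton $N^{(g,f)}(\ell,m)$ has state set $Q^{(g,f)}_\ell$, initial state $S^{(g,f)}_\varepsilon(\ell)=\ell$, initial value $m$, transitions $\delta(S^{(g,f)}_\alpha(\ell),\sigma)=S^{(g,f)}_{\alpha\sigma}(\ell)$, monoid-transition values $w(S^{(g,f)}_\alpha(\ell),\sigma)=g(\Delta_\sigma(S^{(g,f)}_\alpha(\ell)))$,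 and final values $\rho(S^{(g,f)}_\alpha(\ell))=(S^{(g,f)}_\alpha(\ell))(\varepsilon)$. *)

theory Defs
  imports Main
begin

definition lscale :: "'m::monoid_mult \<Rightarrow> ('a list \<Rightarrow> 'm) \<Rightarrow> ('a list \<Rightarrow> 'm)" where
  "lscale m l = (\<lambda>\<gamma>. m * l \<gamma>)"

definition Delta :: "'a list \<Rightarrow> ('a list \<Rightarrow> 'm) \<Rightarrow> ('a list \<Rightarrow> 'm)" where
  "Delta \<alpha> l = (\<lambda>\<gamma>. l (\<alpha> @ \<gamma>))"

definition factorization ::
  "(('a list \<Rightarrow> 'm::monoid_mult) \<Rightarrow> 'm) \<Rightarrow> (('a list \<Rightarrow> 'm) \<Rightarrow> ('a list \<Rightarrow> 'm)) \<Rightarrow> bool" where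
  "factorization g f \<longleftrightarrow> (\<forall>l. lscale (g l) (f l) = l)"

definition S :: "(('a list \<Rightarrow> 'm) \<Rightarrow> ('a list \<Rightarrow> 'm)) \<Rightarrow> 'a list \<Rightarrow> ('a list \<Rightarrow> 'm) \<Rightarrow> ('a list \<Rightarrow> 'm)" where
  "S f \<alpha> = foldl (\<lambda>h \<sigma>. f \<circ> Delta [\<sigma>] \<circ> h) id \<alpha>"

definition Qset :: "(('a list \<Rightarrow> 'm) \<Rightarrow> ('a list \<Rightarrow> 'm)) \<Rightarrow> ('a list \<Rightarrow> 'm) \<Rightarrow> ('a list \<Rightarrow> 'm) set" where
  "Qset f l = {S f \<alpha> l | \<alpha>. True}"

record ('q, 'a, 'm) mdfa =
  states :: "'q set"
  init :: 'q
  ival :: 'm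
  trans :: "'q \<Rightarrow> 'a \<Rightarrow> 'q"
  wt :: "'q \<Rightarrow> 'a \<Rightarrow> 'm"
  fin :: "'q \<Rightarrow> 'm"

definition is_mdfa :: "('q, 'a, 'm) mdfa \<Rightarrow> bool" where
  "is_mdfa A \<longleftrightarrow> finite (states A) \<and> states A \<noteq> {} \<and> init A \<in> states A
     \<and> (\<forall>q\<in>states A. \<forall>\<sigma>. trans A q \<sigma> \<in> states A)"

definition ext :: "('q, 'a, 'm) mdfa \<Rightarrow> 'q \<Rightarrow> 'a list \<Rightarrow> 'q" where
  "ext A q \<alpha> = foldl (trans A) q \<alpha>"

fun wstar_rev :: "('q, 'a, 'm::monoid_mult) mdfa \<Rightarrow> 'q \<Rightarrow> 'a list \<Rightarrow> 'm" where
  "wstar_rev A q [] = 1"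
| "wstar_rev A q (\<sigma> # r) = wstar_rev A q r * wt A (ext A q (rev r)) \<sigma>"

definition wstar :: "('q, 'a, 'm::monoid_mult) mdfa \<Rightarrow> 'q \<Rightarrow> 'a list \<Rightarrow> 'm" where
  "wstar A q \<alpha> = wstar_rev A q (rev \<alpha>)"

definition mdfa_lang :: "('q, 'a, 'm::monoid_mult) mdfa \<Rightarrow> 'a list \<Rightarrow> 'm" where
  "mdfa_lang A = (\<lambda>\<alpha>. ival A * wstar A (init A) \<alpha> * fin A (ext A (init A) \<alpha>))"

definition state_lang :: "('q, 'a, 'm::monoid_mult) mdfa \<Rightarrow> 'q \<Rightarrow> 'a list \<Rightarrow> 'm" where
  "state_lang A q = (\<lambda>\<alpha>. wstar A q \<alpha> * fin A (ext A q \<alpha>))"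

definition accessible :: "('q, 'a, 'm) mdfa \<Rightarrow> bool" where
  "accessible A \<longleftrightarrow> (\<forall>q\<in>states A. \<exists>\<alpha>. q = ext A (init A) \<alpha>)"

text \<open>Recognizable: recognized by some M-DFA; states encoded as natural numbers
  (any finite state set can be so encoded).\<close>
definition recognizable :: "('a list \<Rightarrow> 'm::monoid_mult) \<Rightarrow> bool" where
  "recognizable l \<longleftrightarrow> (\<exists>A :: (nat, 'a, 'm) mdfa. is_mdfa A \<and> mdfa_lang A = l)"

definition Naut :: "(('a list \<Rightarrow> 'm::monoid_mult) \<Rightarrow> 'm) \<Rightarrow> (('a list \<Rightarrow> 'm) \<Rightarrow> ('a list \<Rightarrow> 'm))
    \<Rightarrow> ('a list \<Rightarrow> 'm) \<Rightarrow> 'm \<Rightarrow> ('a list \<Rightarrow> 'm, 'a, 'm) mdfa" where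
  "Naut g f l m = \<lparr> states = Qset f l, init = S f [] l, ival = m,
      trans = (\<lambda>q \<sigma>. f (Delta [\<sigma>] q)),
      wt = (\<lambda>q \<sigma>. g (Delta [\<sigma>] q)),
      fin = (\<lambda>q. q []) \<rparr>"

end

theory Submission
  imports Defs
begin

text \<open>Along a word \<gamma>, the automaton N splits off the weight g of each derivative and continues
  with the remainder f, so the factorization law yields the invariant
  w*(q, \<gamma>) \<cdot> S_\<gamma>(q)(\<delta>) = q(\<gamma>\<delta>) for every language q. Taking \<delta> = \<epsilon> shows that every state of N
  recognizes itself; this gives the recognized language, the state languages and their
  distinctness at once. The states of N(S_\<alpha>(\<ell>), 1) lie in Q_\<ell>, so this automaton is an M-DFA
  recognizing S_\<alpha>(\<ell>), which after relabelling its states by natural numbers proves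
  recognizability.\<close>

lemma factorization_apply: "factorization g f \<Longrightarrow> g l * f l \<gamma> = l \<gamma>"
  unfolding factorization_def lscale_def by metis

lemma S_Nil [simp]: "S f [] l = l"
  by (simp add: S_def)

lemma S_snoc: "S f (\<alpha> @ [\<sigma>]) l = f (Delta [\<sigma>] (S f \<alpha> l))"
  by (simp add: S_def)

lemma S_append: "S f (\<alpha> @ \<beta>) l = S f \<beta> (S f \<alpha> l)"
  by (induction \<beta> rule: rev_induct) (simp_all add: S_snoc flip: append_assoc)

lemma S_in_Qset: "S f \<alpha> l \<in> Qset f l"
  unfolding Qset_def by blast

lemma Qset_S_subset: "Qset f (S f \<alpha> l) \<subseteq> Qset f l"
  unfolding Qset_def by (auto simp flip: S_append)

lemma ext_Nil [simp]: "ext A q [] = q"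
  by (simp add: ext_def)

lemma ext_snoc: "ext A q (\<alpha> @ [\<sigma>]) = trans A (ext A q \<alpha>) \<sigma>"
  by (simp add: ext_def)

lemma wstar_Nil [simp]: "wstar A q [] = 1"
  by (simp add: wstar_def)

lemma wstar_snoc: "wstar A q (\<alpha> @ [\<sigma>]) = wstar A q \<alpha> * wt A (ext A q \<alpha>) \<sigma>"
  by (simp add: wstar_def)

lemma ext_in_states: "is_mdfa A \<Longrightarrow> q \<in> states A \<Longrightarrow> ext A q \<alpha> \<in> states A"
  by (induction \<alpha> rule: rev_induct) (simp_all add: ext_snoc is_mdfa_def)

lemma Naut_simps [simp]:
  "states (Naut g f l m) = Qset f l" "init (Naut g f l m) = l" "ival (Naut g f l m) = m"
  "trans (Naut g f l m) q \<sigma> = f (Delta [\<sigma>] q)"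
  "wt (Naut g f l m) q \<sigma> = g (Delta [\<sigma>] q)"
  "fin (Naut g f l m) q = q []"
  by (simp_all add: Naut_def)

lemma ext_Naut [simp]: "ext (Naut g f l m) q \<alpha> = S f \<alpha> q"
  by (induction \<alpha> rule: rev_induct) (simp_all add: ext_snoc S_snoc)

lemma wstar_Naut_mult_S:
  assumes "factorization g f"
  shows "wstar (Naut g f l m) q \<gamma> * S f \<gamma> q \<delta> = q (\<gamma> @ \<delta>)"
proof (induction \<gamma> arbitrary: \<delta> rule: rev_induct)
  case Nil
  then show ?case by simp
next
  case (snoc \<sigma> \<gamma>)
  let ?p = "S f \<gamma> q"
  have "wstar (Naut g f l m) q (\<gamma> @ [\<sigma>]) * S f (\<gamma> @ [\<sigma>]) q \<delta>
      = wstar (Naut g f l m) q \<gamma> * (g (Delta [\<sigma>] ?p) * f (Delta [\<sigma>] ?p) \<delta>)"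
    by (simp add: wstar_snoc S_snoc mult.assoc)
  also have "\<dots> = wstar (Naut g f l m) q \<gamma> * ?p (\<sigma> # \<delta>)"
    by (simp add: factorization_apply[OF assms] Delta_def)
  also have "\<dots> = q (\<gamma> @ [\<sigma>] @ \<delta>)"
    using snoc by simp
  finally show ?case by simp
qed

lemma state_lang_Naut:
  assumes "factorization g f"
  shows "state_lang (Naut g f l m) q = q"
  using wstar_Naut_mult_S[OF assms, where \<delta> = "[]"] by (simp add: state_lang_def)

lemma mdfa_lang_Naut:
  assumes "factorization g f"
  shows "mdfa_lang (Naut g f l m) = lscale m l"
  using wstar_Naut_mult_S[OF assms, where \<delta> = "[]"]
  by (simp add: mdfa_lang_def lscale_def mult.assoc)

lemma is_mdfa_Naut:
  assumes "finite (Qset f l)"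
  shows "is_mdfa (Naut g f l m)"
proof -
  have "l \<in> Qset f l"
    using S_in_Qset[of f "[]" l] by simp
  moreover have "f (Delta [\<sigma>] q) \<in> Qset f l" if "q \<in> Qset f l" for q \<sigma>
    using that S_in_Qset[of f "_ @ [\<sigma>]" l] unfolding Qset_def by (auto simp: S_snoc)
  ultimately show ?thesis
    using assms by (auto simp: is_mdfa_def)
qed

lemma accessible_Naut: "accessible (Naut g f l m)"
  by (auto simp: accessible_def Qset_def)

text \<open>Off the image of the states, inv_into returns an arbitrary state; this is harmless
  since only states reachable from the initial one enter the language.\<close>
definition relabel :: "('q \<Rightarrow> 'p) \<Rightarrow> ('q, 'a, 'm) mdfa \<Rightarrow> ('p, 'a, 'm) mdfa" where
  "relabel h A = \<lparr> states = h ` states A, init = h (init A), ival = ival A,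
     trans = (\<lambda>n \<sigma>. h (trans A (inv_into (states A) h n) \<sigma>)),
     wt = (\<lambda>n \<sigma>. wt A (inv_into (states A) h n) \<sigma>),
     fin = (\<lambda>n. fin A (inv_into (states A) h n)) \<rparr>"

lemma relabel_simps [simp]:
  "states (relabel h A) = h ` states A" "init (relabel h A) = h (init A)"
  "ival (relabel h A) = ival A"
  "trans (relabel h A) n \<sigma> = h (trans A (inv_into (states A) h n) \<sigma>)"
  "wt (relabel h A) n \<sigma> = wt A (inv_into (states A) h n) \<sigma>"
  "fin (relabel h A) n = fin A (inv_into (states A) h n)"
  by (simp_all add: relabel_def)

lemma ext_relabel:
  assumes "is_mdfa A" "inj_on h (states A)" "q \<in> states A"
  shows "ext (relabel h A) (h q) \<alpha> = h (ext A q \<alpha>)"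
  using ext_in_states[OF assms(1,3)]
  by (induction \<alpha> rule: rev_induct) (simp_all add: ext_snoc inv_into_f_f[OF assms(2)])

lemma wstar_relabel:
  assumes "is_mdfa A" "inj_on h (states A)" "q \<in> states A"
  shows "wstar (relabel h A) (h q) \<alpha> = wstar A q \<alpha>"
  using ext_in_states[OF assms(1,3)]
  by (induction \<alpha> rule: rev_induct)
    (simp_all add: wstar_snoc ext_relabel[OF assms] inv_into_f_f[OF assms(2)])

lemma is_mdfa_relabel: "is_mdfa A \<Longrightarrow> is_mdfa (relabel h A)"
  by (auto simp: is_mdfa_def inv_into_into)

lemma mdfa_lang_relabel:
  assumes "is_mdfa A" "inj_on h (states A)"
  shows "mdfa_lang (relabel h A) = mdfa_lang A"
proof -
  have init: "init A \<in> states A"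
    using assms(1) by (simp add: is_mdfa_def)
  show ?thesis
    using ext_in_states[OF assms(1) init]
    by (simp add: mdfa_lang_def ext_relabel[OF assms init] wstar_relabel[OF assms init]
        inv_into_f_f[OF assms(2)])
qed

lemma recognizable_mdfa_lang:
  fixes A :: "('q, 'a, 'm::monoid_mult) mdfa"
  assumes "is_mdfa A"
  shows "recognizable (mdfa_lang A)"
proof -
  obtain h :: "'q \<Rightarrow> nat" where "inj_on h (states A)"
    using assms finite_imp_inj_to_nat_seg unfolding is_mdfa_def by metis
  then show ?thesis
    using assms is_mdfa_relabel mdfa_lang_relabel unfolding recognizable_def by metis
qed

theorem mainTheorem10:
  fixes g :: "('a::finite list \<Rightarrow> 'm::monoid_mult) \<Rightarrow> 'm"
    and f :: "('a list \<Rightarrow> 'm) \<Rightarrow> ('a list \<Rightarrow> 'm)"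
    and l :: "'a list \<Rightarrow> 'm"
  assumes "factorization g f"
    and "finite (Qset f l)"
  shows "\<forall>m. is_mdfa (Naut g f l m)
    \<and> mdfa_lang (Naut g f l m) = lscale m l
    \<and> accessible (Naut g f l m)
    \<and> (\<forall>\<alpha>. recognizable (S f \<alpha> l))
    \<and> (\<forall>\<alpha>. state_lang (Naut g f l m) (S f \<alpha> l) = S f \<alpha> l)
    \<and> (\<forall>p\<in>states (Naut g f l m). \<forall>q\<in>states (Naut g f l m).
          state_lang (Naut g f l m) p = state_lang (Naut g f l m) q \<longrightarrow> p = q)"
proof -
  have "recognizable (S f \<alpha> l)" for \<alpha>
  proof -
    have "finite (Qset f (S f \<alpha> l))"
      using finite_subset[OF Qset_S_subset assms(2)] .
    then have "recognizable (mdfa_lang (Naut g f (S f \<alpha> l) 1))"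
      by (intro recognizable_mdfa_lang is_mdfa_Naut)
    then show ?thesis
      by (simp add: mdfa_lang_Naut[OF assms(1)] lscale_def)
  qed
  then show ?thesis
    using is_mdfa_Naut[OF assms(2)]
    by (simp add: mdfa_lang_Naut[OF assms(1)] state_lang_Naut[OF assms(1)] accessible_Naut)
qed

end
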